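(* Let $G$ be a graph with $m=|E(G)|$ edges, and let $(G',L,\alpha,\beta)$ be constructed from $G$ as described in the context. If $G$ is 3-colorable, then there exists an $L$-recoloring sequence for $G'$ from $\alpha$ to $\beta$ of length at most $c\cdot(m+1)$, where $c$ is an absolute constant.
   Context: A color list assignment $L$ gives each vertex a list $L(v)\subseteq[4]=\{1,2,3,4\}$. An $L$-coloring is a proper coloring $\gamma$ with $\gamma(v)\in L(v)$ for all $v$. $\mathcal{C}(G,L)$ is the graph on $L$-colorings, two adjacent iff they differ on exactly one vertex; an $L$-recoloring sequence of length $m$ is a sequence $\gamma_0,\ldots,\gamma_m$ of $L$-colorings with consecutive ones equal or adjacent in $\mathcal{C}(G,L)$. $(a,b)$-forbidding path: for $a,b\in[4]$, a path $P$ with lists $L(x)\subseteq[4]$ and end vertices $u,v$ is $(a,b)$-forbidding from $u$ to $v$ if (i) for all $x\in L(u)$, $y\in L(v)$, there is an $L$-coloring $\gamma$ of $P$ with $\gamma(u)=x,\gamma(v)=y$ iff $x\ne a$ or $y\ne b$ (such $(x,y)$ are called admissible); and (ii) for any $L$-coloring $\gamma$ of $P$ and any admissible $(x,y)$ with $x=\gamma(u)$ or $y=\gamma(v)$, there is an $L$-recoloring sequence of $P$ from $\gamma$ to an $L$-coloring $\delta$ with $\delta(u)=x,\delta(v)=y$ in which each internal vertex is recolored at most once and $u,v$ are not recolored until the last step. Such paths of length six exist whenever $L(u),L(v)\ne[4]$, $a\in L(u)$, $b\in L(v)$. Construction of $G'$: start with $V(G)$ (no edges among these), each $u\in V(G)$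 with $L(u)=\{1,2,3\}$, $\alpha(u)=1$. For every edge $uv\in E(G)$ (with a fixed orientation $u,v$), add new vertices $x_{uv},y_{uv},z_{uv}$ with $\alpha$-value $4$ each and $L(x_{uv})=\{1,2,4\}$, $L(y_{uv})=\{3,4\}$, $L(z_{uv})=\{1,2,4\}$; add edges $ux_{uv}$, $uy_{uv}$; and add (each with its own new internal vertices, each of length six) a $(1,2)$-forbidding and a $(3,1)$-forbidding path from $u$ to $x_{uv}$, a $(2,3)$-forbidding path from $u$ to $y_{uv}$, a $(2,1)$-forbidding and a $(3,2)$-forbidding path from $v$ to $x_{uv}$, a $(1,3)$-forbidding path from $v$ to $y_{uv}$, a $(4,1)$-forbidding path from $x_{uv}$ to $z_{uv}$, and a $(4,2)$-forbidding path from $y_{uv}$ to $z_{uv}$. Let $Z=\{z_{uv}\mid uv\in E(G)\}$. Add vertices $a,b,c,d$ with $\alpha(a)=1,\alpha(b)=2,\alpha(c)=3,\alpha(d)=4$, $L(a)=\{1,2,3\}$, $L(b)=\{1,2\}$, $L(c)=\{3,4\}$, $L(d)=\{4\}$, all edges among $a,b,c,d$ except $cd$, and edges from every vertex of $Z$ to $c$. Extend $\alpha$ arbitrarily to an $L$-coloring of all internal vertices of the forbidding paths (possible since the end colors are admissible). Set $\beta(w)=\alpha(w)$ for all $w\ne a,b$, $\beta(a)=2$, $\beta(b)=1$. *)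

theory Defs
  imports Main
begin

text \<open>Colors are natural numbers; lists are sets of colors. A coloring is a function
  from vertices to colors; only its values on the vertex set matter.\<close>

definition is_Lcol :: "'a set \<Rightarrow> ('a \<Rightarrow> 'a \<Rightarrow> bool) \<Rightarrow> ('a \<Rightarrow> nat set) \<Rightarrow> ('a \<Rightarrow> nat) \<Rightarrow> bool" where
  "is_Lcol Vs adj L \<gamma> \<longleftrightarrow>
     (\<forall>v\<in>Vs. \<gamma> v \<in> L v) \<and> (\<forall>u\<in>Vs. \<forall>v\<in>Vs. adj u v \<longrightarrow> \<gamma> u \<noteq> \<gamma> v)"

definition recol_seq :: "'a set \<Rightarrow> ('a \<Rightarrow> 'a \<Rightarrow> bool) \<Rightarrow> ('a \<Rightarrow> nat set) \<Rightarrow> (nat \<Rightarrow> 'a \<Rightarrow> nat) \<Rightarrow> nat \<Rightarrow> bool" where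
  "recol_seq Vs adj L \<sigma> m \<longleftrightarrow>
     (\<forall>i\<le>m. is_Lcol Vs adj L (\<sigma> i)) \<and>
     (\<forall>i<m. \<forall>v\<in>Vs. \<forall>w\<in>Vs. \<sigma> i v \<noteq> \<sigma> (Suc i) v \<and> \<sigma> i w \<noteq> \<sigma> (Suc i) w \<longrightarrow> v = w)"

definition path_adj :: "'a list \<Rightarrow> 'a \<Rightarrow> 'a \<Rightarrow> bool" where
  "path_adj ps x y \<longleftrightarrow> (\<exists>i. Suc i < length ps \<and>
      ((ps ! i = x \<and> ps ! Suc i = y) \<or> (ps ! i = y \<and> ps ! Suc i = x)))"

definition forbidding :: "nat \<Rightarrow> nat \<Rightarrow> 'a list \<Rightarrow> ('a \<Rightarrow> nat set) \<Rightarrow> bool" where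
  "forbidding a b ps L \<longleftrightarrow>
     (let u = hd ps; v = last ps; Vs = set ps; adj = path_adj ps in
      distinct ps \<and> 2 \<le> length ps \<and>
      (\<forall>x\<in>L u. \<forall>y\<in>L v.
          (\<exists>\<gamma>. is_Lcol Vs adj L \<gamma> \<and> \<gamma> u = x \<and> \<gamma> v = y) \<longleftrightarrow> (x \<noteq> a \<or> y \<noteq> b)) \<and>
      (\<forall>\<gamma> x y. is_Lcol Vs adj L \<gamma> \<and> x \<in> L u \<and> y \<in> L v \<and> (x \<noteq> a \<or> y \<noteq> b) \<and>
                (x = \<gamma> u \<or> y = \<gamma> v) \<longrightarrow>
         (\<exists>\<sigma> m. recol_seq Vs adj L \<sigma> m \<and> (\<forall>w\<in>Vs. \<sigma> 0 w = \<gamma> w) \<and>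
                 \<sigma> m u = x \<and> \<sigma> m v = y \<and>
                 (\<forall>w\<in>set (butlast (tl ps)). card {i. i < m \<and> \<sigma> (Suc i) w \<noteq> \<sigma> i w} \<le> 1) \<and>
                 (\<forall>i. Suc i < m \<longrightarrow> \<sigma> (Suc i) u = \<sigma> i u \<and> \<sigma> (Suc i) v = \<sigma> i v))))"

text \<open>A finite simple graph on vertex set V (naturals) with edge set E of 2-element subsets,
  together with a fixed orientation: ori e = (u,v) with e = {u,v}.\<close>

definition oriented_graph :: "nat set \<Rightarrow> nat set set \<Rightarrow> (nat set \<Rightarrow> nat \<times> nat) \<Rightarrow> bool" where
  "oriented_graph V E ori \<longleftrightarrow> finite V \<and>
     (\<forall>e\<in>E. e \<subseteq> V \<and> card e = 2 \<and> e = {fst (ori e), snd (ori e)})"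

definition three_colorable :: "nat set \<Rightarrow> nat set set \<Rightarrow> bool" where
  "three_colorable V E \<longleftrightarrow> (\<exists>f::nat \<Rightarrow> nat. (\<forall>v\<in>V. f v \<in> {1,2,3}) \<and>
     (\<forall>e\<in>E. \<forall>u\<in>e. \<forall>v\<in>e. u \<noteq> v \<longrightarrow> f u \<noteq> f v))"

datatype vtx = Orig nat | Xv "nat set" | Yv "nat set" | Zv "nat set"
  | Pv "nat set" nat nat  \<comment> \<open>internal vertex i (1..5) of the k-th forbidding path (k<8) of edge e\<close>
  | Av | Bv | Cv | Dv

text \<open>The eight forbidding paths per edge e oriented as (u,v): (start, end, a, b).\<close>

definition pspecs :: "nat set \<Rightarrow> nat \<times> nat \<Rightarrow> (vtx \<times> vtx \<times> nat \<times> nat) list" where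
  "pspecs e uv = (let u = fst uv; v = snd uv in
     [(Orig u, Xv e, 1, 2), (Orig u, Xv e, 3, 1), (Orig u, Yv e, 2, 3),
      (Orig v, Xv e, 2, 1), (Orig v, Xv e, 3, 2), (Orig v, Yv e, 1, 3),
      (Xv e, Zv e, 4, 1), (Yv e, Zv e, 4, 2)])"

definition gpath :: "nat set \<Rightarrow> nat \<times> nat \<Rightarrow> nat \<Rightarrow> vtx list" where
  "gpath e uv k = [fst (pspecs e uv ! k)] @ map (Pv e k) [1..<6] @ [fst (snd (pspecs e uv ! k))]"

definition path_a :: "nat set \<Rightarrow> nat \<times> nat \<Rightarrow> nat \<Rightarrow> nat" where
  "path_a e uv k = fst (snd (snd (pspecs e uv ! k)))"

definition path_b :: "nat set \<Rightarrow> nat \<times> nat \<Rightarrow> nat \<Rightarrow> nat" where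
  "path_b e uv k = snd (snd (snd (pspecs e uv ! k)))"

definition Gp_V :: "nat set \<Rightarrow> nat set set \<Rightarrow> vtx set" where
  "Gp_V V E = Orig ` V \<union> Xv ` E \<union> Yv ` E \<union> Zv ` E \<union>
     {Pv e k i | e k i. e \<in> E \<and> k < 8 \<and> 1 \<le> i \<and> i \<le> 5} \<union> {Av, Bv, Cv, Dv}"

definition Gp_edges :: "nat set set \<Rightarrow> (nat set \<Rightarrow> nat \<times> nat) \<Rightarrow> (vtx \<times> vtx) set" where
  "Gp_edges E ori =
     {(Orig (fst (ori e)), Xv e) | e. e \<in> E} \<union>
     {(Orig (fst (ori e)), Yv e) | e. e \<in> E} \<union>
     {(gpath e (ori e) k ! i, gpath e (ori e) k ! Suc i) | e k i. e \<in> E \<and> k < 8 \<and> i < 6} \<union>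
     {(Av, Bv), (Av, Cv), (Av, Dv), (Bv, Cv), (Bv, Dv)} \<union>
     {(Zv e, Cv) | e. e \<in> E}"

definition Gp_adj :: "nat set set \<Rightarrow> (nat set \<Rightarrow> nat \<times> nat) \<Rightarrow> vtx \<Rightarrow> vtx \<Rightarrow> bool" where
  "Gp_adj E ori x y \<longleftrightarrow> (x, y) \<in> Gp_edges E ori \<or> (y, x) \<in> Gp_edges E ori"

fun Gp_L :: "(nat set \<Rightarrow> nat \<Rightarrow> nat \<Rightarrow> nat set) \<Rightarrow> vtx \<Rightarrow> nat set" where
  "Gp_L Lint (Orig _) = {1,2,3}"
| "Gp_L Lint (Xv _) = {1,2,4}"
| "Gp_L Lint (Yv _) = {3,4}"
| "Gp_L Lint (Zv _) = {1,2,4}"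
| "Gp_L Lint (Pv e k i) = Lint e k i"
| "Gp_L Lint Av = {1,2,3}"
| "Gp_L Lint Bv = {1,2}"
| "Gp_L Lint Cv = {3,4}"
| "Gp_L Lint Dv = {4}"

fun Gp_alpha :: "(nat set \<Rightarrow> nat \<Rightarrow> nat \<Rightarrow> nat) \<Rightarrow> vtx \<Rightarrow> nat" where
  "Gp_alpha aint (Orig _) = 1"
| "Gp_alpha aint (Xv _) = 4"
| "Gp_alpha aint (Yv _) = 4"
| "Gp_alpha aint (Zv _) = 4"
| "Gp_alpha aint (Pv e k i) = aint e k i"
| "Gp_alpha aint Av = 1"
| "Gp_alpha aint Bv = 2"
| "Gp_alpha aint Cv = 3"
| "Gp_alpha aint Dv = 4"

definition Gp_beta :: "(nat set \<Rightarrow> nat \<Rightarrow> nat \<Rightarrow> nat) \<Rightarrow> vtx \<Rightarrow> nat" where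
  "Gp_beta aint = (Gp_alpha aint)(Av := 2, Bv := 1)"

definition valid_construction :: "nat set \<Rightarrow> nat set set \<Rightarrow> (nat set \<Rightarrow> nat \<times> nat)
    \<Rightarrow> (nat set \<Rightarrow> nat \<Rightarrow> nat \<Rightarrow> nat set) \<Rightarrow> (nat set \<Rightarrow> nat \<Rightarrow> nat \<Rightarrow> nat) \<Rightarrow> bool" where
  "valid_construction V E ori Lint aint \<longleftrightarrow>
     (\<forall>e\<in>E. \<forall>k<8. \<forall>i\<in>{1..5}. Lint e k i \<subseteq> {1,2,3,4}) \<and>
     (\<forall>e\<in>E. \<forall>k<8. forbidding (path_a e (ori e) k) (path_b e (ori e) k) (gpath e (ori e) k) (Gp_L Lint)) \<and>
     is_Lcol (Gp_V V E) (Gp_adj E ori) (Gp_L Lint) (Gp_alpha aint)"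

end

theory Submission
  imports Defs
begin

text \<open>Fix a proper 3-coloring \<open>f\<close> of \<open>G\<close>. The vertices outside the forbidding paths are
  recolored in four phases: the original vertices to \<open>f\<close>; every \<open>x_uv\<close>, \<open>y_uv\<close> to a colour
  determined by \<open>f u\<close>; every \<open>z_uv\<close>; finally \<open>c\<close> to 4. Each intermediate coloring of these
  vertices is admissible at the ends of every forbidding path and no path has both ends
  recolored in the same phase. Before a phase, each path with an end to be recolored is
  prepared by running its own recoloring sequence (property (ii)) up to the last step: at most
  five moves, after which the neighbour of that end avoids its new colour, so the end can then
  be recolored in one move. A phase thus costs \<open>40 m\<close> moves plus the number of recolored
  vertices. With \<open>c\<close> coloured 4, \<open>a\<close> and \<open>b\<close> exchange their colours in three moves; as
  they are adjacent only to each other, \<open>c\<close> and \<open>d\<close>, the forward phases run backwards with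
  \<open>a\<close>, \<open>b\<close> exchanged then lead to \<open>\<beta>\<close>.\<close>

section \<open>Recoloring sequences\<close>

definition agree_on :: "'a set \<Rightarrow> ('a \<Rightarrow> nat) \<Rightarrow> ('a \<Rightarrow> nat) \<Rightarrow> bool" where
  "agree_on Vs g h \<longleftrightarrow> (\<forall>z\<in>Vs. g z = h z)"

definition single_change :: "'a set \<Rightarrow> ('a \<Rightarrow> nat) \<Rightarrow> ('a \<Rightarrow> nat) \<Rightarrow> bool" where
  "single_change Vs g h \<longleftrightarrow> (\<forall>v\<in>Vs. \<forall>w\<in>Vs. g v \<noteq> h v \<and> g w \<noteq> h w \<longrightarrow> v = w)"

definition recolorable ::
    "'a set \<Rightarrow> ('a \<Rightarrow> 'a \<Rightarrow> bool) \<Rightarrow> ('a \<Rightarrow> nat set) \<Rightarrow> nat \<Rightarrow> ('a \<Rightarrow> nat) \<Rightarrow> ('a \<Rightarrow> nat) \<Rightarrow> bool" where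
  "recolorable Vs adj L k g h \<longleftrightarrow>
     (\<exists>\<sigma> n. recol_seq Vs adj L \<sigma> n \<and> n \<le> k \<and> agree_on Vs (\<sigma> 0) g \<and> agree_on Vs (\<sigma> n) h)"

lemma recol_seq_iff:
  "recol_seq Vs adj L \<sigma> m \<longleftrightarrow>
     (\<forall>i\<le>m. is_Lcol Vs adj L (\<sigma> i)) \<and> (\<forall>i<m. single_change Vs (\<sigma> i) (\<sigma> (Suc i)))"
  unfolding recol_seq_def single_change_def by blast

lemma is_Lcol_in_L: "is_Lcol Vs adj L g \<Longrightarrow> v \<in> Vs \<Longrightarrow> g v \<in> L v"
  unfolding is_Lcol_def by blast

lemma is_Lcol_adj: "is_Lcol Vs adj L g \<Longrightarrow> u \<in> Vs \<Longrightarrow> v \<in> Vs \<Longrightarrow> adj u v \<Longrightarrow> g u \<noteq> g v"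
  unfolding is_Lcol_def by blast

lemma single_changeD:
  "single_change Vs g h \<Longrightarrow> v \<in> Vs \<Longrightarrow> w \<in> Vs \<Longrightarrow> g v \<noteq> h v \<Longrightarrow> g w \<noteq> h w \<Longrightarrow> v = w"
  unfolding single_change_def by blast

lemma single_change_fun_upd:
  "single_change Vs g h \<Longrightarrow> single_change Vs (g(x := c)) (h(x := c))"
  unfolding single_change_def by auto

lemma agree_on_refl [simp]: "agree_on Vs g g"
  and agree_on_trans: "agree_on Vs g h \<Longrightarrow> agree_on Vs h k \<Longrightarrow> agree_on Vs g k"
  unfolding agree_on_def by auto

lemma is_Lcol_agree_on: "is_Lcol Vs adj L g \<Longrightarrow> agree_on Vs g h \<Longrightarrow> is_Lcol Vs adj L h"
  unfolding is_Lcol_def agree_on_def by simp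

lemma single_change_agree_on:
  "single_change Vs g h \<Longrightarrow> agree_on Vs g g' \<Longrightarrow> agree_on Vs h h' \<Longrightarrow> single_change Vs g' h'"
  unfolding single_change_def agree_on_def by simp

lemma recol_seq_prefix: "recol_seq Vs adj L \<sigma> m \<Longrightarrow> m' \<le> m \<Longrightarrow> recol_seq Vs adj L \<sigma> m'"
  unfolding recol_seq_iff by simp

text \<open>Otherwise both \<open>u\<close> and \<open>p\<close> would change in the step.\<close>

lemma single_change_neighbour:
  assumes g: "is_Lcol Vs adj L g" and h: "is_Lcol Vs adj L h" and step: "single_change Vs g h"
    and uv: "u \<in> Vs" "p \<in> Vs" "adj u p"
  shows "g p \<noteq> h u"
proof
  assume gp: "g p = h u"
  have "g u \<noteq> g p" "h u \<noteq> h p" using is_Lcol_adj[OF g uv] is_Lcol_adj[OF h uv] .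
  then have "u = p" using single_changeD[OF step uv(1,2)] gp by simp
  then show False using \<open>g u \<noteq> g p\<close> by simp
qed

lemma recolorable_refl: "is_Lcol Vs adj L g \<Longrightarrow> agree_on Vs g h \<Longrightarrow> recolorable Vs adj L 0 g h"
  unfolding recolorable_def
  by (rule exI[of _ "\<lambda>_. g"], rule exI[of _ 0]) (auto simp: recol_seq_iff)

lemma recolorable_step:
  assumes "is_Lcol Vs adj L g" "is_Lcol Vs adj L h" "single_change Vs g h"
  shows "recolorable Vs adj L 1 g h"
  unfolding recolorable_def using assms
  by (intro exI[of _ "\<lambda>i. if i = 0 then g else h"] exI[of _ 1]) (auto simp: recol_seq_iff le_Suc_eq)

lemma recolor_vertex:
  assumes g: "is_Lcol Vs adj L g" and c: "c \<in> L w"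
    and free: "\<forall>y\<in>Vs. adj w y \<or> adj y w \<longrightarrow> g y \<noteq> c"
  shows "recolorable Vs adj L 1 g (g(w := c))"
proof (rule recolorable_step[OF g])
  show "is_Lcol Vs adj L (g(w := c))"
    unfolding is_Lcol_def
  proof (intro conjI ballI impI)
    fix v assume "v \<in> Vs"
    then show "(g(w := c)) v \<in> L v" using is_Lcol_in_L[OF g] c by simp
  next
    fix u v assume uv: "u \<in> Vs" "v \<in> Vs" "adj u v"
    then have "u \<noteq> v" using is_Lcol_adj[OF g uv] by blast
    then show "(g(w := c)) u \<noteq> (g(w := c)) v"
      using free uv is_Lcol_adj[OF g uv] by auto
  qed
  show "single_change Vs g (g(w := c))" unfolding single_change_def by auto
qed

lemma recolorable_mono: "recolorable Vs adj L k g h \<Longrightarrow> k \<le> k' \<Longrightarrow> recolorable Vs adj L k' g h"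
  unfolding recolorable_def by (meson le_trans)

lemma recolorable_is_Lcol:
  assumes "recolorable Vs adj L k g h"
  shows "is_Lcol Vs adj L g" and "is_Lcol Vs adj L h"
  using assms is_Lcol_agree_on unfolding recolorable_def recol_seq_iff by blast+

lemma recolorable_agree_on:
  "recolorable Vs adj L k g h \<Longrightarrow> agree_on Vs h h' \<Longrightarrow> recolorable Vs adj L k g h'"
  unfolding recolorable_def using agree_on_trans by blast

lemma recolorable_trans:
  assumes "recolorable Vs adj L k1 g h" and "recolorable Vs adj L k2 h q"
  shows "recolorable Vs adj L (k1 + k2) g q"
proof -
  obtain s1 n1 where s1: "recol_seq Vs adj L s1 n1" "n1 \<le> k1" "agree_on Vs (s1 0) g" "agree_on Vs (s1 n1) h"
    using assms(1) unfolding recolorable_def by blast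
  obtain s2 n2 where s2: "recol_seq Vs adj L s2 n2" "n2 \<le> k2" "agree_on Vs (s2 0) h" "agree_on Vs (s2 n2) q"
    using assms(2) unfolding recolorable_def by blast
  define s where "s i = (if i \<le> n1 then s1 i else s2 (i - n1))" for i
  have tail: "agree_on Vs (s2 (i - n1)) (s i)" if "n1 \<le> i" for i
    using that s1(4) s2(3) by (cases "i = n1") (auto simp: s_def agree_on_def)
  have "recol_seq Vs adj L s (n1 + n2)"
    unfolding recol_seq_iff
  proof (intro conjI allI impI)
    fix i assume "i \<le> n1 + n2"
    then show "is_Lcol Vs adj L (s i)"
      using s1(1) s2(1) tail[of i] is_Lcol_agree_on by (cases "i \<le> n1") (auto simp: s_def recol_seq_iff)
  next
    fix i assume i: "i < n1 + n2"
    show "single_change Vs (s i) (s (Suc i))"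
    proof (cases "i < n1")
      case True then show ?thesis using s1(1) by (simp add: s_def recol_seq_iff)
    next
      case False
      then have "single_change Vs (s2 (i - n1)) (s2 (Suc i - n1))"
        using s2(1) i by (simp add: recol_seq_iff Suc_diff_le)
      then show ?thesis using False tail[of i] tail[of "Suc i"] single_change_agree_on by simp
    qed
  qed
  moreover have "agree_on Vs (s (n1 + n2)) q" using tail[of "n1 + n2"] s2(4) unfolding agree_on_def by simp
  ultimately show ?thesis
    unfolding recolorable_def using s1(2,3) s2(2) by (intro exI[of _ s] exI[of _ "n1 + n2"]) (auto simp: s_def)
qed

lemma recolorable_sym:
  assumes "recolorable Vs adj L k g h" shows "recolorable Vs adj L k h g"
proof -
  obtain s n where s: "recol_seq Vs adj L s n" "n \<le> k" "agree_on Vs (s 0) g" "agree_on Vs (s n) h"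
    using assms unfolding recolorable_def by blast
  have "recol_seq Vs adj L (\<lambda>i. s (n - i)) n"
    unfolding recol_seq_iff
  proof (intro conjI allI impI)
    fix i assume "i \<le> n" then show "is_Lcol Vs adj L (s (n - i))" using s(1) by (simp add: recol_seq_iff)
  next
    fix i assume i: "i < n"
    then have "single_change Vs (s (n - Suc i)) (s (Suc (n - Suc i)))"
      using s(1) by (simp add: recol_seq_iff)
    moreover have "Suc (n - Suc i) = n - i" using i by simp
    ultimately have "single_change Vs (s (n - Suc i)) (s (n - i))" by simp
    then show "single_change Vs (s (n - i)) (s (n - Suc i))" unfolding single_change_def by fastforce
  qed
  then show ?thesis unfolding recolorable_def using s by (intro exI[of _ "\<lambda>i. s (n - i)"] exI[of _ n]) auto
qed

lemma recolorable_map: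
  assumes "recolorable Vs adj L k g h"
    and "\<And>q. is_Lcol Vs adj L q \<Longrightarrow> is_Lcol Vs adj L (F q)"
    and "\<And>q r. single_change Vs q r \<Longrightarrow> single_change Vs (F q) (F r)"
    and "\<And>q r. agree_on Vs q r \<Longrightarrow> agree_on Vs (F q) (F r)"
  shows "recolorable Vs adj L k (F g) (F h)"
proof -
  obtain s n where s: "recol_seq Vs adj L s n" "n \<le> k" "agree_on Vs (s 0) g" "agree_on Vs (s n) h"
    using assms(1) unfolding recolorable_def by blast
  have "recol_seq Vs adj L (\<lambda>i. F (s i)) n" using s(1) assms(2,3) by (simp add: recol_seq_iff)
  then show ?thesis
    unfolding recolorable_def using s assms(4) by (intro exI[of _ "\<lambda>i. F (s i)"] exI[of _ n]) auto
qed

lemma recolorable_card_changes: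
  assumes "recol_seq Vs adj L \<sigma> m"
  shows "recolorable Vs adj L (card {i. i < m \<and> \<not> agree_on Vs (\<sigma> i) (\<sigma> (Suc i))}) (\<sigma> 0) (\<sigma> m)"
  using assms
proof (induction m)
  case 0
  then show ?case by (simp add: recolorable_refl recol_seq_iff)
next
  case (Suc m)
  let ?C = "\<lambda>m. {i. i < m \<and> \<not> agree_on Vs (\<sigma> i) (\<sigma> (Suc i))}"
  have seq: "recol_seq Vs adj L \<sigma> m" using Suc.prems by (simp add: recol_seq_iff)
  note IH = Suc.IH[OF seq]
  show ?case
  proof (cases "agree_on Vs (\<sigma> m) (\<sigma> (Suc m))")
    case True
    then have "?C (Suc m) = ?C m" by (auto simp: less_Suc_eq)
    then show ?thesis using recolorable_agree_on[OF IH True] by simp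
  next
    case False
    then have "?C (Suc m) = insert m (?C m)" by (auto simp: less_Suc_eq)
    then have card: "card (?C (Suc m)) = card (?C m) + 1" by simp
    have "recolorable Vs adj L 1 (\<sigma> m) (\<sigma> (Suc m))"
      using Suc.prems by (intro recolorable_step) (auto simp: recol_seq_iff)
    from recolorable_trans[OF IH this] show ?thesis using card by simp
  qed
qed

section \<open>Systems of forbidding paths\<close>

lemma path_adj_sym: "path_adj ps u v \<Longrightarrow> path_adj ps v u"
  unfolding path_adj_def by blast

lemma path_adj_mem: "path_adj ps u v \<Longrightarrow> u \<in> set ps \<and> v \<in> set ps"
  unfolding path_adj_def by (auto intro: nth_mem)

lemma path_adj_7:
  "path_adj [p0,p1,p2,p3,p4,p5,p6] u v \<longleftrightarrow>
     p0 = u \<and> p1 = v \<or> p0 = v \<and> p1 = u \<or> p1 = u \<and> p2 = v \<or> p1 = v \<and> p2 = u \<or>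
     p2 = u \<and> p3 = v \<or> p2 = v \<and> p3 = u \<or> p3 = u \<and> p4 = v \<or> p3 = v \<and> p4 = u \<or>
     p4 = u \<and> p5 = v \<or> p4 = v \<and> p5 = u \<or> p5 = u \<and> p6 = v \<or> p5 = v \<and> p6 = u"
  unfolding path_adj_def by (simp add: numeral_eq_Suc less_Suc_eq conj_disj_distribR ex_disj_distrib)

lemma forbidding_recoloring:
  assumes "forbidding a b ps L" and "is_Lcol (set ps) (path_adj ps) L \<gamma>"
    and "x \<in> L (hd ps)" "y \<in> L (last ps)" "x \<noteq> a \<or> y \<noteq> b" "x = \<gamma> (hd ps) \<or> y = \<gamma> (last ps)"
  obtains \<sigma> m where "recol_seq (set ps) (path_adj ps) L \<sigma> m" "\<forall>w\<in>set ps. \<sigma> 0 w = \<gamma> w"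
    "\<sigma> m (hd ps) = x" "\<sigma> m (last ps) = y"
    "\<forall>w\<in>set (butlast (tl ps)). card {i. i < m \<and> \<sigma> (Suc i) w \<noteq> \<sigma> i w} \<le> 1"
    "\<forall>i. Suc i < m \<longrightarrow> \<sigma> (Suc i) (hd ps) = \<sigma> i (hd ps) \<and> \<sigma> (Suc i) (last ps) = \<sigma> i (last ps)"
  using assms(1) unfolding forbidding_def Let_def
  apply (elim conjE)
  apply (drule spec[of _ \<gamma>], drule spec[of _ x], drule spec[of _ y])
  using assms(2-) that by blast

locale forbidding_path_system =
  fixes Vs :: "'a set" and adj :: "'a \<Rightarrow> 'a \<Rightarrow> bool" and L :: "'a \<Rightarrow> nat set"
    and I :: "'b set" and P :: "'b \<Rightarrow> 'a list" and fa fb :: "'b \<Rightarrow> nat"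
  assumes finite_I: "finite I"
    and forbidding_P: "j \<in> I \<Longrightarrow> forbidding (fa j) (fb j) (P j) L"
    and length_P: "j \<in> I \<Longrightarrow> length (P j) = 7"
    and P_subset: "j \<in> I \<Longrightarrow> set (P j) \<subseteq> Vs"
    and path_adj_adj: "j \<in> I \<Longrightarrow> path_adj (P j) x y \<Longrightarrow> adj x y"
    and interior_adj: "j \<in> I \<Longrightarrow> x \<in> set (butlast (tl (P j))) \<Longrightarrow> y \<in> Vs \<Longrightarrow> adj x y \<or> adj y x
        \<Longrightarrow> path_adj (P j) x y"
    and interior_unique: "j \<in> I \<Longrightarrow> j' \<in> I \<Longrightarrow> x \<in> set (butlast (tl (P j))) \<Longrightarrow> x \<in> set (P j')
        \<Longrightarrow> j = j'"
begin

definition interior :: "'b \<Rightarrow> 'a set" where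
  "interior j = set (butlast (tl (P j)))"

definition skeletal :: "'a \<Rightarrow> bool" where
  "skeletal z \<longleftrightarrow> (\<forall>j\<in>I. z \<notin> interior j)"

lemma P_shape:
  assumes "j \<in> I"
  obtains p0 p1 p2 p3 p4 p5 p6 where "P j = [p0,p1,p2,p3,p4,p5,p6]" "distinct [p0,p1,p2,p3,p4,p5,p6]"
proof -
  have "distinct (P j)" using forbidding_P[OF assms] unfolding forbidding_def Let_def by simp
  with length_P[OF assms] show ?thesis
    using that by (auto simp: length_Suc_conv numeral_eq_Suc)
qed

lemma P_nth_facts:
  assumes "j \<in> I"
  shows "interior j = {P j ! 1, P j ! 2, P j ! 3, P j ! 4, P j ! 5}"
    and "set (P j) = insert (P j ! 0) (insert (P j ! 6) (interior j))"
    and "P j ! 0 \<notin> interior j" and "P j ! 6 \<notin> interior j" and "P j ! 0 \<noteq> P j ! 6"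
    and "card (interior j) = 5" and "interior j \<subseteq> set (P j)"
    and "path_adj (P j) (P j ! 0) (P j ! 1)" and "path_adj (P j) (P j ! 5) (P j ! 6)"
proof -
  obtain p0 p1 p2 p3 p4 p5 p6 where "P j = [p0,p1,p2,p3,p4,p5,p6]" "distinct [p0,p1,p2,p3,p4,p5,p6]"
    using assms by (rule P_shape)
  then show "interior j = {P j ! 1, P j ! 2, P j ! 3, P j ! 4, P j ! 5}"
    and "set (P j) = insert (P j ! 0) (insert (P j ! 6) (interior j))"
    and "P j ! 0 \<notin> interior j" and "P j ! 6 \<notin> interior j" and "P j ! 0 \<noteq> P j ! 6"
    and "card (interior j) = 5" and "interior j \<subseteq> set (P j)"
    and "path_adj (P j) (P j ! 0) (P j ! 1)" and "path_adj (P j) (P j ! 5) (P j ! 6)"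
    by (auto simp: interior_def path_adj_7)
qed

lemma ends_skeletal:
  assumes "j \<in> I" shows "skeletal (P j ! 0)" and "skeletal (P j ! 6)"
proof -
  have "P j ! 0 \<in> set (P j)" "P j ! 6 \<in> set (P j)" using P_nth_facts(2)[OF assms] by auto
  then show "skeletal (P j ! 0)" "skeletal (P j ! 6)"
    using interior_unique[OF _ assms] P_nth_facts(3,4)[OF assms]
    unfolding skeletal_def interior_def by blast+
qed

lemma ends_in_Vs:
  assumes "j \<in> I" shows "P j ! 0 \<in> Vs" and "P j ! 6 \<in> Vs"
  using P_subset[OF assms] nth_mem[of 0 "P j"] nth_mem[of 6 "P j"] length_P[OF assms] by auto

lemma skeletal_neighbour_of_interior:
  assumes "j \<in> I" "y \<in> interior j" "skeletal w" "path_adj (P j) y w"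
  shows "(w = P j ! 0 \<and> y = P j ! 1) \<or> (w = P j ! 6 \<and> y = P j ! 5)"
  using assms(1)
proof (rule P_shape)
  fix p0 p1 p2 p3 p4 p5 p6 assume Pj: "P j = [p0,p1,p2,p3,p4,p5,p6]" "distinct [p0,p1,p2,p3,p4,p5,p6]"
  have "w \<notin> interior j" using assms(1,3) unfolding skeletal_def by blast
  moreover have "path_adj [p0,p1,p2,p3,p4,p5,p6] y w" using assms(4) Pj by simp
  ultimately show ?thesis using assms(2) Pj unfolding interior_def path_adj_7 by auto
qed

lemma interior_splice_is_Lcol:
  assumes j: "j \<in> I" and \<gamma>: "is_Lcol Vs adj L \<gamma>" and h: "is_Lcol (set (P j)) (path_adj (P j)) L h"
    and ends: "h (P j ! 0) = \<gamma> (P j ! 0)" "h (P j ! 6) = \<gamma> (P j ! 6)"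
  shows "is_Lcol Vs adj L (\<lambda>z. if z \<in> interior j then h z else \<gamma> z)"
    (is "is_Lcol _ _ _ ?\<tau>")
  unfolding is_Lcol_def
proof (intro conjI ballI impI)
  fix v assume "v \<in> Vs"
  have "h v \<in> L v" if "v \<in> interior j"
    using h that P_nth_facts(7)[OF j] unfolding is_Lcol_def by blast
  then show "?\<tau> v \<in> L v"
    using \<gamma> \<open>v \<in> Vs\<close> unfolding is_Lcol_def by simp
next
  have on_path: "?\<tau> z = h z" if "z \<in> set (P j)" for z
    using that ends P_nth_facts(2)[OF j] by auto
  fix u v assume uv: "u \<in> Vs" "v \<in> Vs" "adj u v"
  show "?\<tau> u \<noteq> ?\<tau> v"
  proof (cases "u \<in> interior j \<or> v \<in> interior j")
    case True
    have pa: "path_adj (P j) u v"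
    proof (cases "u \<in> interior j")
      case True
      then show ?thesis using interior_adj[OF j _ uv(2)] uv(3) unfolding interior_def by blast
    next
      case False
      then have "v \<in> interior j" using \<open>u \<in> interior j \<or> v \<in> interior j\<close> by blast
      then have "path_adj (P j) v u" using interior_adj[OF j _ uv(1)] uv(3) unfolding interior_def by blast
      then show ?thesis by (rule path_adj_sym)
    qed
    then show ?thesis using h on_path path_adj_mem[OF pa] unfolding is_Lcol_def by simp
  next
    case False
    then show ?thesis using \<gamma> uv unfolding is_Lcol_def by simp
  qed
qed

text \<open>Interior vertices have neighbours only on their own path, so a recoloring of the path that
  keeps its ends fixed can be carried out inside the whole graph.\<close>

lemma recolor_interior:
  assumes j: "j \<in> I" and \<gamma>: "is_Lcol Vs adj L \<gamma>"
    and seq: "recol_seq (set (P j)) (path_adj (P j)) L \<sigma> m"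
    and start: "\<forall>w\<in>set (P j). \<sigma> 0 w = \<gamma> w"
    and ends: "\<forall>i\<le>m. \<sigma> i (P j ! 0) = \<gamma> (P j ! 0) \<and> \<sigma> i (P j ! 6) = \<gamma> (P j ! 6)"
  shows "recolorable Vs adj L (\<Sum>z\<in>interior j. card {i. i < m \<and> \<sigma> (Suc i) z \<noteq> \<sigma> i z})
    \<gamma> (\<lambda>z. if z \<in> interior j then \<sigma> m z else \<gamma> z)"
proof -
  define \<tau> where "\<tau> i = (\<lambda>z. if z \<in> interior j then \<sigma> i z else \<gamma> z)" for i
  have \<tau>_seq: "recol_seq Vs adj L \<tau> m"
    unfolding recol_seq_iff
  proof (intro conjI allI impI)
    fix i assume "i \<le> m"
    then show "is_Lcol Vs adj L (\<tau> i)"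
      unfolding \<tau>_def using interior_splice_is_Lcol[OF j \<gamma>] seq ends by (simp add: recol_seq_iff)
  next
    fix i assume "i < m"
    then have "single_change (set (P j)) (\<sigma> i) (\<sigma> (Suc i))" using seq by (simp add: recol_seq_iff)
    then show "single_change Vs (\<tau> i) (\<tau> (Suc i))"
      unfolding single_change_def \<tau>_def using P_nth_facts(2)[OF j] by auto
  qed
  have "\<tau> 0 = \<gamma>" unfolding \<tau>_def using start P_nth_facts(7)[OF j] by (auto intro!: ext)
  with recolorable_card_changes[OF \<tau>_seq]
  have reach: "recolorable Vs adj L (card {i. i < m \<and> \<not> agree_on Vs (\<tau> i) (\<tau> (Suc i))}) \<gamma> (\<tau> m)"
    by simp
  have "{i. i < m \<and> \<not> agree_on Vs (\<tau> i) (\<tau> (Suc i))}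
      \<subseteq> (\<Union>z\<in>interior j. {i. i < m \<and> \<sigma> (Suc i) z \<noteq> \<sigma> i z})"
    unfolding agree_on_def \<tau>_def by (auto split: if_splits)
  moreover have "finite (interior j)" using P_nth_facts(1)[OF j] by simp
  ultimately have "card {i. i < m \<and> \<not> agree_on Vs (\<tau> i) (\<tau> (Suc i))}
      \<le> card (\<Union>z\<in>interior j. {i. i < m \<and> \<sigma> (Suc i) z \<noteq> \<sigma> i z})"
    by (intro card_mono) auto
  also have "\<dots> \<le> (\<Sum>z\<in>interior j. card {i. i < m \<and> \<sigma> (Suc i) z \<noteq> \<sigma> i z})"
    using \<open>finite (interior j)\<close> by (rule card_UN_le)
  finally show ?thesis using recolorable_mono[OF reach] unfolding \<tau>_def by blast
qed

text \<open>A forbidding path can be prepared for a change of one end colour in five moves: run the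
  recoloring sequence of the path up to, but excluding, its last step, which is the one that
  recolors the end. By \<open>single_change_neighbour\<close>, the neighbour of each end then already
  avoids that end's new colour.\<close>

lemma prepare_path:
  assumes j: "j \<in> I" and \<gamma>: "is_Lcol Vs adj L \<gamma>"
    and x: "x \<in> L (P j ! 0)" and y: "y \<in> L (P j ! 6)" and adm: "x \<noteq> fa j \<or> y \<noteq> fb j"
    and fixed: "x = \<gamma> (P j ! 0) \<or> y = \<gamma> (P j ! 6)"
  obtains \<delta> where "recolorable Vs adj L 5 \<gamma> \<delta>" "\<And>z. z \<notin> interior j \<Longrightarrow> \<delta> z = \<gamma> z"
    "\<delta> (P j ! 1) \<noteq> x" "\<delta> (P j ! 5) \<noteq> y"
proof -
  let ?ps = "P j" and ?u = "P j ! 0" and ?v = "P j ! 6"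
  have hd_last: "hd ?ps = ?u" "last ?ps = ?v" using j by (rule P_shape, simp)+
  have \<gamma>_path: "is_Lcol (set ?ps) (path_adj ?ps) L \<gamma>"
    using \<gamma> P_subset[OF j] path_adj_adj[OF j] unfolding is_Lcol_def by blast
  have ends_L: "x \<in> L (hd ?ps)" "y \<in> L (last ?ps)" and fixed': "x = \<gamma> (hd ?ps) \<or> y = \<gamma> (last ?ps)"
    using x y fixed hd_last by simp_all
  obtain \<sigma> m where seq: "recol_seq (set ?ps) (path_adj ?ps) L \<sigma> m"
    and start: "\<forall>w\<in>set ?ps. \<sigma> 0 w = \<gamma> w" and final: "\<sigma> m (hd ?ps) = x" "\<sigma> m (last ?ps) = y"
    and once: "\<forall>w\<in>set (butlast (tl ?ps)). card {i. i < m \<and> \<sigma> (Suc i) w \<noteq> \<sigma> i w} \<le> 1"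
    and ends_late: "\<forall>i. Suc i < m \<longrightarrow> \<sigma> (Suc i) (hd ?ps) = \<sigma> i (hd ?ps) \<and>
        \<sigma> (Suc i) (last ?ps) = \<sigma> i (last ?ps)"
    by (rule forbidding_recoloring[OF forbidding_P[OF j] \<gamma>_path ends_L adm fixed'])
  define m' where "m' = m - 1"
  have ends_kept: "\<forall>i\<le>m'. \<sigma> i ?u = \<gamma> ?u \<and> \<sigma> i ?v = \<gamma> ?v"
  proof (intro allI impI)
    fix i assume "i \<le> m'"
    then show "\<sigma> i ?u = \<gamma> ?u \<and> \<sigma> i ?v = \<gamma> ?v"
    proof (induction i)
      case 0 then show ?case using start P_nth_facts(2)[OF j] by simp
    next
      case (Suc i) then show ?case using ends_late hd_last unfolding m'_def by fastforce
    qed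
  qed
  have once': "card {i. i < m' \<and> \<sigma> (Suc i) z \<noteq> \<sigma> i z} \<le> 1" if "z \<in> interior j" for z
  proof -
    have "{i. i < m' \<and> \<sigma> (Suc i) z \<noteq> \<sigma> i z} \<subseteq> {i. i < m \<and> \<sigma> (Suc i) z \<noteq> \<sigma> i z}"
      unfolding m'_def by auto
    then have "card {i. i < m' \<and> \<sigma> (Suc i) z \<noteq> \<sigma> i z} \<le> card {i. i < m \<and> \<sigma> (Suc i) z \<noteq> \<sigma> i z}"
      by (rule card_mono[rotated]) simp
    moreover have "card {i. i < m \<and> \<sigma> (Suc i) z \<noteq> \<sigma> i z} \<le> 1"
      using once that unfolding interior_def by blast
    ultimately show ?thesis by linarith
  qed
  have "(\<Sum>z\<in>interior j. card {i. i < m' \<and> \<sigma> (Suc i) z \<noteq> \<sigma> i z}) \<le> (\<Sum>z\<in>interior j. 1)"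
    by (rule sum_mono) (rule once')
  also have "\<dots> = 5" using P_nth_facts(6)[OF j] by simp
  finally have count: "(\<Sum>z\<in>interior j. card {i. i < m' \<and> \<sigma> (Suc i) z \<noteq> \<sigma> i z}) \<le> 5" .
  have "m' \<le> m" by (simp add: m'_def)
  from recolor_interior[OF j \<gamma> recol_seq_prefix[OF seq this] start ends_kept]
  have reach: "recolorable Vs adj L 5 \<gamma> (\<lambda>z. if z \<in> interior j then \<sigma> m' z else \<gamma> z)"
    using count by (rule recolorable_mono)
  have nbrs: "\<sigma> m' (P j ! 1) \<noteq> x" "\<sigma> m' (P j ! 5) \<noteq> y"
  proof -
    have path_col: "is_Lcol (set ?ps) (path_adj ?ps) L (\<sigma> i)" if "i \<le> m" for i
      using seq that by (simp add: recol_seq_iff)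
    have last_step: "single_change (set ?ps) (\<sigma> m') (\<sigma> m)"
      using seq unfolding m'_def recol_seq_iff single_change_def by (cases m) auto
    have on_path: "?u \<in> set ?ps" "P j ! 1 \<in> set ?ps" "P j ! 5 \<in> set ?ps" "?v \<in> set ?ps"
      using P_nth_facts(1,2)[OF j] by auto
    show "\<sigma> m' (P j ! 1) \<noteq> x" "\<sigma> m' (P j ! 5) \<noteq> y"
      using single_change_neighbour[OF path_col path_col last_step on_path(1,2) P_nth_facts(8)[OF j]]
        single_change_neighbour[OF path_col path_col last_step on_path(4,3)
          path_adj_sym[OF P_nth_facts(9)[OF j]]] final hd_last
      by (simp_all add: m'_def)
  qed
  have "P j ! 1 \<in> interior j" "P j ! 5 \<in> interior j" using P_nth_facts(1)[OF j] by auto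
  with nbrs show ?thesis by (intro that[OF reach]) simp_all
qed

definition admissible_ends :: "('a \<Rightarrow> nat) \<Rightarrow> bool" where
  "admissible_ends s \<longleftrightarrow> (\<forall>j\<in>I. s (P j ! 0) \<noteq> fa j \<or> s (P j ! 6) \<noteq> fb j)"

definition prepared :: "'a set \<Rightarrow> ('a \<Rightarrow> nat) \<Rightarrow> 'b \<Rightarrow> ('a \<Rightarrow> nat) \<Rightarrow> bool" where
  "prepared W s j \<delta> \<longleftrightarrow>
     (P j ! 0 \<in> W \<longrightarrow> \<delta> (P j ! 1) \<noteq> s (P j ! 0)) \<and> (P j ! 6 \<in> W \<longrightarrow> \<delta> (P j ! 5) \<noteq> s (P j ! 6))"

lemma prepare_one_path:
  assumes j: "j \<in> I" and \<delta>: "is_Lcol Vs adj L \<delta>" and s_L: "\<forall>w\<in>W. s w \<in> L w"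
    and s_outside: "\<forall>z\<in>Vs. skeletal z \<and> z \<notin> W \<longrightarrow> s z = \<delta> z"
    and one_end: "P j ! 0 \<notin> W \<or> P j ! 6 \<notin> W" and adm: "admissible_ends s"
  obtains \<delta>' where "recolorable Vs adj L 5 \<delta> \<delta>'" "\<And>z. z \<notin> interior j \<Longrightarrow> \<delta>' z = \<delta> z"
    "prepared W s j \<delta>'"
proof -
  have kept: "P j ! 0 \<notin> W \<Longrightarrow> s (P j ! 0) = \<delta> (P j ! 0)" "P j ! 6 \<notin> W \<Longrightarrow> s (P j ! 6) = \<delta> (P j ! 6)"
    using s_outside ends_skeletal[OF j] ends_in_Vs[OF j] by auto
  have "\<delta> (P j ! 0) \<in> L (P j ! 0)" "\<delta> (P j ! 6) \<in> L (P j ! 6)"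
    using is_Lcol_in_L[OF \<delta>] ends_in_Vs[OF j] by blast+
  then have s_ends_L: "s (P j ! 0) \<in> L (P j ! 0)" "s (P j ! 6) \<in> L (P j ! 6)"
    using s_L kept by (cases "P j ! 0 \<in> W", simp_all, cases "P j ! 6 \<in> W", simp_all)
  have s_end_kept: "s (P j ! 0) = \<delta> (P j ! 0) \<or> s (P j ! 6) = \<delta> (P j ! 6)"
    using one_end kept by blast
  have s_adm: "s (P j ! 0) \<noteq> fa j \<or> s (P j ! 6) \<noteq> fb j"
    using adm j unfolding admissible_ends_def by blast
  obtain \<delta>' where "recolorable Vs adj L 5 \<delta> \<delta>'" "\<And>z. z \<notin> interior j \<Longrightarrow> \<delta>' z = \<delta> z"
    "\<delta>' (P j ! 1) \<noteq> s (P j ! 0)" "\<delta>' (P j ! 5) \<noteq> s (P j ! 6)"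
    using prepare_path[OF j \<delta> s_ends_L s_adm s_end_kept] by blast
  then show ?thesis using that unfolding prepared_def by blast
qed

lemma prepared_other_path:
  assumes "j \<in> I" "j' \<in> I" "j' \<noteq> j" "prepared W s j' \<delta>" "\<And>z. z \<notin> interior j \<Longrightarrow> \<delta>' z = \<delta> z"
  shows "prepared W s j' \<delta>'"
proof -
  have "P j' ! 1 \<in> set (P j')" "P j' ! 5 \<in> set (P j')"
    using P_nth_facts(1,7)[OF assms(2)] by auto
  then have "P j' ! 1 \<notin> interior j" "P j' ! 5 \<notin> interior j"
    using interior_unique[OF assms(1,2)] assms(3) unfolding interior_def by blast+
  then show ?thesis using assms(4,5) unfolding prepared_def by simp
qed

lemma prepare_paths:
  assumes \<gamma>: "is_Lcol Vs adj L \<gamma>" and s_L: "\<forall>w\<in>W. s w \<in> L w"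
    and s_outside: "\<forall>z\<in>Vs. skeletal z \<and> z \<notin> W \<longrightarrow> s z = \<gamma> z"
    and one_end: "\<forall>j\<in>I. P j ! 0 \<notin> W \<or> P j ! 6 \<notin> W" and adm: "admissible_ends s"
    and K: "K \<subseteq> I"
  shows "\<exists>\<delta>. recolorable Vs adj L (5 * card K) \<gamma> \<delta> \<and> (\<forall>z. skeletal z \<longrightarrow> \<delta> z = \<gamma> z)
    \<and> (\<forall>j\<in>K. prepared W s j \<delta>)"
proof -
  have "finite K" using K finite_I finite_subset by blast
  from this K show ?thesis
  proof (induction K rule: finite_induct)
    case empty
    then show ?case using recolorable_refl[OF \<gamma> agree_on_refl] by auto
  next
    case (insert j K)
    then obtain \<delta> where reach: "recolorable Vs adj L (5 * card K) \<gamma> \<delta>"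
      and skel: "\<forall>z. skeletal z \<longrightarrow> \<delta> z = \<gamma> z" and prep: "\<forall>j\<in>K. prepared W s j \<delta>"
      by auto
    have j: "j \<in> I" using insert by simp
    obtain \<delta>' where reach': "recolorable Vs adj L 5 \<delta> \<delta>'"
      and same: "\<And>z. z \<notin> interior j \<Longrightarrow> \<delta>' z = \<delta> z" and prep': "prepared W s j \<delta>'"
      using prepare_one_path[OF j recolorable_is_Lcol(2)[OF reach] s_L _ _ adm] s_outside skel
        one_end j by auto
    have "recolorable Vs adj L (5 * card (insert j K)) \<gamma> \<delta>'"
      using recolorable_trans[OF reach reach'] insert by (simp add: add.commute)
    moreover have "\<forall>z. skeletal z \<longrightarrow> \<delta>' z = \<gamma> z" using same skel j unfolding skeletal_def by auto
    moreover note prep'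
    moreover have "prepared W s j' \<delta>'" if "j' \<in> K" for j'
      using prepared_other_path[of j j' W s \<delta> \<delta>'] j that insert(2,4) prep same by auto
    ultimately show ?case by blast
  qed
qed

text \<open>Once all paths are prepared, the vertices of \<open>W\<close> can be recolored one at a time: their
  skeletal neighbours lie outside \<open>W\<close> and avoid the new colours, and their neighbours inside
  the paths are exactly the prepared ones.\<close>

lemma recolor_prepared:
  assumes \<delta>: "is_Lcol Vs adj L \<delta>" and W: "finite W" "W \<subseteq> Vs" "\<forall>w\<in>W. skeletal w"
    and s_L: "\<forall>w\<in>W. s w \<in> L w"
    and nbrs: "\<forall>w\<in>W. \<forall>y\<in>Vs. (adj w y \<or> adj y w) \<longrightarrow> skeletal y \<longrightarrow> y \<notin> W \<and> s w \<noteq> \<delta> y"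
    and prep: "\<forall>j\<in>I. prepared W s j \<delta>"
    and W': "W' \<subseteq> W"
  shows "recolorable Vs adj L (card W') \<delta> (\<lambda>z. if z \<in> W' then s z else \<delta> z)"
proof -
  have "finite W'" using W' W(1) finite_subset by blast
  from this W' show ?thesis
  proof (induction W' rule: finite_induct)
    case empty
    then show ?case using recolorable_refl[OF \<delta>] by (simp add: agree_on_def)
  next
    case (insert w W')
    define g where "g = (\<lambda>z. if z \<in> W' then s z else \<delta> z)"
    have reach: "recolorable Vs adj L (card W') \<delta> g" using insert g_def by simp
    have g: "is_Lcol Vs adj L g" using recolorable_is_Lcol(2)[OF reach] .
    have w: "w \<in> W" "w \<in> Vs" "skeletal w" using insert W by auto
    have new: "(\<lambda>z. if z \<in> insert w W' then s z else \<delta> z) = g(w := s w)"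
      unfolding g_def by auto
    have "g y \<noteq> s w" if y: "y \<in> Vs" "adj w y \<or> adj y w" for y
    proof (cases "skeletal y")
      case True
      then have "y \<notin> W" "s w \<noteq> \<delta> y" using nbrs w(1) y by blast+
      moreover have "y \<notin> W'" using \<open>y \<notin> W\<close> insert(4) by blast
      ultimately show ?thesis by (simp add: g_def)
    next
      case False
      then obtain j where j: "j \<in> I" and yj: "y \<in> interior j" unfolding skeletal_def by blast
      have "path_adj (P j) y w"
        using interior_adj[OF j _ w(2)] yj y unfolding interior_def by blast
      then have ends: "(w = P j ! 0 \<and> y = P j ! 1) \<or> (w = P j ! 6 \<and> y = P j ! 5)"
        using skeletal_neighbour_of_interior[OF j yj w(3)] by blast
      have "y \<notin> W" using False W(3) by blast
      then have "g y = \<delta> y" using insert(4) by (auto simp: g_def)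
      moreover have "\<delta> y \<noteq> s w" using ends prep j w(1) unfolding prepared_def by auto
      ultimately show ?thesis by simp
    qed
    then have "recolorable Vs adj L 1 g (g(w := s w))"
      using recolor_vertex[OF g] s_L w(1) by blast
    from recolorable_trans[OF reach this] show ?case using insert new by simp
  qed
qed

lemma recolor_skeleton:
  assumes \<gamma>: "is_Lcol Vs adj L \<gamma>" and \<gamma>_s: "\<forall>z\<in>Vs. skeletal z \<longrightarrow> \<gamma> z = s z"
    and W: "finite W" "W \<subseteq> Vs" "\<forall>w\<in>W. skeletal w"
    and s'_outside: "\<forall>z\<in>Vs. z \<notin> W \<longrightarrow> s' z = s z" and s'_L: "\<forall>w\<in>W. s' w \<in> L w"
    and nbrs: "\<forall>w\<in>W. \<forall>y\<in>Vs. (adj w y \<or> adj y w) \<longrightarrow> skeletal y \<longrightarrow> y \<notin> W \<and> s' w \<noteq> s' y"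
    and one_end: "\<forall>j\<in>I. P j ! 0 \<notin> W \<or> P j ! 6 \<notin> W" and adm: "admissible_ends s'"
  obtains \<delta> where "recolorable Vs adj L (5 * card I + card W) \<gamma> \<delta>" "\<forall>z\<in>Vs. skeletal z \<longrightarrow> \<delta> z = s' z"
proof -
  obtain \<delta>0 where reach0: "recolorable Vs adj L (5 * card I) \<gamma> \<delta>0"
    and skel0: "\<forall>z. skeletal z \<longrightarrow> \<delta>0 z = \<gamma> z" and prep: "\<forall>j\<in>I. prepared W s' j \<delta>0"
    using prepare_paths[OF \<gamma> s'_L _ one_end adm subset_refl] s'_outside \<gamma>_s by auto
  have nbrs0: "\<forall>w\<in>W. \<forall>y\<in>Vs. (adj w y \<or> adj y w) \<longrightarrow> skeletal y \<longrightarrow> y \<notin> W \<and> s' w \<noteq> \<delta>0 y"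
  proof (intro ballI impI)
    fix w y assume "w \<in> W" "y \<in> Vs" "adj w y \<or> adj y w" "skeletal y"
    then have "y \<notin> W" "s' w \<noteq> s' y" using nbrs by blast+
    moreover have "\<delta>0 y = s' y"
      using skel0 \<gamma>_s s'_outside \<open>y \<in> Vs\<close> \<open>skeletal y\<close> \<open>y \<notin> W\<close> by simp
    ultimately show "y \<notin> W \<and> s' w \<noteq> \<delta>0 y" by simp
  qed
  have "recolorable Vs adj L (card W) \<delta>0 (\<lambda>z. if z \<in> W then s' z else \<delta>0 z)"
    using recolor_prepared[OF recolorable_is_Lcol(2)[OF reach0] W s'_L nbrs0 prep subset_refl] .
  moreover have "\<forall>z\<in>Vs. skeletal z \<longrightarrow> (if z \<in> W then s' z else \<delta>0 z) = s' z"
    using skel0 \<gamma>_s s'_outside by simp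
  ultimately show ?thesis using recolorable_trans[OF reach0] that by blast
qed

end

section \<open>The graph G'\<close>

fun is_path_interior :: "vtx \<Rightarrow> bool" where
  "is_path_interior (Pv _ _ _) = True"
| "is_path_interior _ = False"

lemma less_8_cases: "(k::nat) < 8 \<Longrightarrow> k = 0 \<or> k = 1 \<or> k = 2 \<or> k = 3 \<or> k = 4 \<or> k = 5 \<or> k = 6 \<or> k = 7"
  by arith

lemma gpath_conv:
  "gpath e uv k = [fst (pspecs e uv ! k), Pv e k 1, Pv e k 2, Pv e k 3, Pv e k 4, Pv e k 5,
     fst (snd (pspecs e uv ! k))]"
  by (simp add: gpath_def upt_rec)

lemma gpath_length: "length (gpath e uv k) = 7"
  by (simp add: gpath_conv)

lemma gpath_interior: "set (butlast (tl (gpath e uv k))) = {Pv e k 1, Pv e k 2, Pv e k 3, Pv e k 4, Pv e k 5}"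
  by (simp add: gpath_conv)

lemma gpath_ends:
  "k < 8 \<Longrightarrow> (gpath e uv k ! 0, gpath e uv k ! 6, path_a e uv k, path_b e uv k) \<in>
     {(Orig (fst uv), Xv e, 1, 2), (Orig (fst uv), Xv e, 3, 1), (Orig (fst uv), Yv e, 2, 3),
      (Orig (snd uv), Xv e, 2, 1), (Orig (snd uv), Xv e, 3, 2), (Orig (snd uv), Yv e, 1, 3),
      (Xv e, Zv e, 4, 1), (Yv e, Zv e, 4, 2)}"
  by (drule less_8_cases) (auto simp: gpath_conv pspecs_def Let_def path_a_def path_b_def)

lemma gpath_set:
  assumes "k < 8"
  shows "set (gpath e uv k) \<subseteq>
    {Orig (fst uv), Orig (snd uv), Xv e, Yv e, Zv e, Pv e k 1, Pv e k 2, Pv e k 3, Pv e k 4, Pv e k 5}"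
proof -
  have "set (gpath e uv k) = {gpath e uv k ! 0, Pv e k 1, Pv e k 2, Pv e k 3, Pv e k 4, Pv e k 5, gpath e uv k ! 6}"
    by (simp add: gpath_conv)
  then show ?thesis using gpath_ends[OF assms, of e uv] by auto
qed

lemma gpath_nth_mem: "i < 7 \<Longrightarrow> gpath e uv k ! i \<in> set (gpath e uv k)"
  by (simp add: gpath_length)

lemma gpath_nth_Pv:
  assumes "k' < 8" "i < 7" "gpath e' uv k' ! i = Pv e k n"
  shows "e' = e \<and> k' = k"
  using gpath_set[OF assms(1), of e' uv] gpath_nth_mem[OF assms(2), of e' uv k'] assms(3) by auto

lemma gpath_nth_not_ABCD: "k < 8 \<Longrightarrow> i < 7 \<Longrightarrow> gpath e uv k ! i \<notin> {Av, Bv, Cv, Dv}"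
  using gpath_set[of k e uv] gpath_nth_mem[of i e uv k] by auto

lemma gpath_edge_has_interior:
  "i < 6 \<Longrightarrow> is_path_interior (gpath e uv k ! i) \<or> is_path_interior (gpath e uv k ! Suc i)"
  by (auto simp: gpath_conv less_Suc_eq numeral_eq_Suc)

locale three_colored_construction =
  fixes V :: "nat set" and E :: "nat set set" and ori :: "nat set \<Rightarrow> nat \<times> nat"
    and Lint :: "nat set \<Rightarrow> nat \<Rightarrow> nat \<Rightarrow> nat set" and aint :: "nat set \<Rightarrow> nat \<Rightarrow> nat \<Rightarrow> nat"
    and f :: "nat \<Rightarrow> nat"
  assumes graph: "oriented_graph V E ori" and construction: "valid_construction V E ori Lint aint"
    and f_colors: "\<forall>v\<in>V. f v \<in> {1,2,3}" and f_proper: "\<forall>e\<in>E. \<forall>u\<in>e. \<forall>v\<in>e. u \<noteq> v \<longrightarrow> f u \<noteq> f v"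
begin

abbreviation "VS \<equiv> Gp_V V E"
abbreviation "ADJ \<equiv> Gp_adj E ori"
abbreviation "LL \<equiv> Gp_L Lint"
abbreviation "path j \<equiv> gpath (fst j) (ori (fst j)) (snd j)"

lemma finite_E: "finite E"
proof -
  have "E \<subseteq> Pow V" "finite V" using graph unfolding oriented_graph_def by auto
  then show ?thesis using finite_subset by blast
qed

lemma edge_ends:
  assumes "e \<in> E"
  shows "e = {fst (ori e), snd (ori e)}" "fst (ori e) \<in> V" "snd (ori e) \<in> V" "fst (ori e) \<noteq> snd (ori e)"
proof -
  have e: "e \<subseteq> V" "card e = 2" "e = {fst (ori e), snd (ori e)}"
    using graph assms unfolding oriented_graph_def by auto
  then show "e = {fst (ori e), snd (ori e)}" "fst (ori e) \<in> V" "snd (ori e) \<in> V" by auto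
  show "fst (ori e) \<noteq> snd (ori e)"
  proof
    assume "fst (ori e) = snd (ori e)"
    then have "card e = 1" by (subst e(3)) simp
    then show False using e(2) by simp
  qed
qed

lemma edge_colors:
  assumes "e \<in> E"
  shows "f (fst (ori e)) \<noteq> f (snd (ori e))" "f (fst (ori e)) \<in> {1,2,3}" "f (snd (ori e)) \<in> {1,2,3}"
proof -
  have "fst (ori e) \<in> e" "snd (ori e) \<in> e" using edge_ends(1)[OF assms] by blast+
  then show "f (fst (ori e)) \<noteq> f (snd (ori e))" using f_proper assms edge_ends(4)[OF assms] by blast
  show "f (fst (ori e)) \<in> {1,2,3}" "f (snd (ori e)) \<in> {1,2,3}"
    using f_colors edge_ends(2,3)[OF assms] by blast+
qed

lemma gpath_subset: "e \<in> E \<Longrightarrow> k < 8 \<Longrightarrow> set (gpath e (ori e) k) \<subseteq> VS"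
  using gpath_set[of k e "ori e"] edge_ends[of e] unfolding Gp_V_def by auto

definition skeleton_edges :: "(vtx \<times> vtx) set" where
  "skeleton_edges =
     {(Orig (fst (ori e)), Xv e) | e. e \<in> E} \<union> {(Orig (fst (ori e)), Yv e) | e. e \<in> E} \<union>
     {(Av, Bv), (Av, Cv), (Av, Dv), (Bv, Cv), (Bv, Dv)} \<union> {(Zv e, Cv) | e. e \<in> E}"

definition path_edges :: "(vtx \<times> vtx) set" where
  "path_edges = {(gpath e (ori e) k ! i, gpath e (ori e) k ! Suc i) | e k i. e \<in> E \<and> k < 8 \<and> i < 6}"

lemma Gp_edges_split: "Gp_edges E ori = skeleton_edges \<union> path_edges"
  unfolding Gp_edges_def skeleton_edges_def path_edges_def by blast

lemma path_edgesE:
  assumes "(w, y) \<in> path_edges"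
  obtains e k i where "k < 8" "i < 6" "w = gpath e (ori e) k ! i" "y = gpath e (ori e) k ! Suc i"
  using assms unfolding path_edges_def by blast

lemma path_adj_Gp_adj:
  assumes "e \<in> E" "k < 8" "path_adj (gpath e (ori e) k) x y"
  shows "Gp_adj E ori x y"
proof -
  obtain i where "i < 6"
    "(gpath e (ori e) k ! i = x \<and> gpath e (ori e) k ! Suc i = y) \<or>
     (gpath e (ori e) k ! i = y \<and> gpath e (ori e) k ! Suc i = x)"
    using assms(3) unfolding path_adj_def gpath_length by auto
  then have "(x, y) \<in> path_edges \<or> (y, x) \<in> path_edges"
    using assms(1,2) unfolding path_edges_def by blast
  then show ?thesis unfolding Gp_adj_def Gp_edges_split by blast
qed

lemma Gp_edge_interior:
  assumes e: "e \<in> E" and k: "k < 8" and x: "x \<in> set (butlast (tl (gpath e (ori e) k)))"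
    and xy: "(x, y) \<in> Gp_edges E ori \<or> (y, x) \<in> Gp_edges E ori"
  shows "path_adj (gpath e (ori e) k) x y"
proof -
  obtain n where xn: "x = Pv e k n" using x unfolding gpath_interior by auto
  then have "(x, y) \<notin> skeleton_edges" "(y, x) \<notin> skeleton_edges"
    unfolding skeleton_edges_def by auto
  then have "(x, y) \<in> path_edges \<or> (y, x) \<in> path_edges" using xy unfolding Gp_edges_split by blast
  then have "\<exists>i<6. {gpath e (ori e) k ! i, gpath e (ori e) k ! Suc i} = {x, y}"
  proof (elim disjE path_edgesE)
    fix e' k' i assume "k' < 8" "i < 6"
      "x = gpath e' (ori e') k' ! i" "y = gpath e' (ori e') k' ! Suc i"
    then show ?thesis using gpath_nth_Pv[of k' i e' "ori e'" e k n] xn by auto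
  next
    fix e' k' i assume "k' < 8" "i < 6"
      "y = gpath e' (ori e') k' ! i" "x = gpath e' (ori e') k' ! Suc i"
    then show ?thesis using gpath_nth_Pv[of k' "Suc i" e' "ori e'" e k n] xn by auto
  qed
  then show ?thesis unfolding path_adj_def gpath_length by (auto simp: doubleton_eq_iff)
qed

lemma gpath_interior_unique:
  assumes "k' < 8" "x \<in> set (butlast (tl (gpath e (ori e) k)))" "x \<in> set (gpath e' (ori e') k')"
  shows "e = e' \<and> k = k'"
  using assms gpath_set[OF assms(1), of e' "ori e'"] unfolding gpath_interior by auto

sublocale forbidding_path_system VS ADJ LL "E \<times> {0..<8}" path
  "\<lambda>j. path_a (fst j) (ori (fst j)) (snd j)" "\<lambda>j. path_b (fst j) (ori (fst j)) (snd j)"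
proof
  show "finite (E \<times> {0..<8::nat})" using finite_E by simp
next
  fix j assume "j \<in> E \<times> {0..<8::nat}"
  then show "forbidding (path_a (fst j) (ori (fst j)) (snd j)) (path_b (fst j) (ori (fst j)) (snd j))
     (path j) LL"
    using construction unfolding valid_construction_def by auto
next
  fix j assume "j \<in> E \<times> {0..<8::nat}"
  then show "length (path j) = 7" "set (path j) \<subseteq> VS" using gpath_subset[of "fst j" "snd j"]
    by (auto simp: gpath_length)
next
  fix j x y assume "j \<in> E \<times> {0..<8::nat}" "path_adj (path j) x y"
  then show "ADJ x y" using path_adj_Gp_adj by auto
next
  fix j x y assume "j \<in> E \<times> {0..<8::nat}" "x \<in> set (butlast (tl (path j)))" "ADJ x y \<or> ADJ y x"
  then show "path_adj (path j) x y" using Gp_edge_interior unfolding Gp_adj_def by auto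
next
  fix j j' x assume "j \<in> E \<times> {0..<8::nat}" "j' \<in> E \<times> {0..<8::nat}"
    "x \<in> set (butlast (tl (path j)))" "x \<in> set (path j')"
  then show "j = j'" using gpath_interior_unique[of "snd j'" x "fst j" "snd j" "fst j'"]
    by (auto simp: prod_eq_iff)
qed

lemma skeletal_if_not_interior: "\<not> is_path_interior z \<Longrightarrow> skeletal z"
  unfolding skeletal_def interior_def gpath_interior by auto

lemma not_interior_if_skeletal: "z \<in> VS \<Longrightarrow> skeletal z \<Longrightarrow> \<not> is_path_interior z"
proof
  assume z: "z \<in> VS" "skeletal z" "is_path_interior z"
  then obtain e k n where zn: "z = Pv e k n" by (cases z) auto
  then have "(e, k) \<in> E \<times> {0..<8}" "z \<in> interior (e, k)"
    using z(1) unfolding Gp_V_def interior_def gpath_interior by auto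
  then show False using z(2) unfolding skeletal_def by blast
qed

lemma path_edge_has_interior:
  "(w, y) \<in> path_edges \<Longrightarrow> is_path_interior w \<or> is_path_interior y"
  using gpath_edge_has_interior by (elim path_edgesE) auto

lemma path_edge_not_AB: "(w, y) \<in> path_edges \<Longrightarrow> w \<notin> {Av, Bv} \<and> y \<notin> {Av, Bv}"
proof (elim path_edgesE)
  fix e k i assume "k < 8" "i < 6" "w = gpath e (ori e) k ! i" "y = gpath e (ori e) k ! Suc i"
  then show ?thesis using gpath_nth_not_ABCD[of k i] gpath_nth_not_ABCD[of k "Suc i"] by simp
qed

lemma skeleton_adj:
  assumes "ADJ w y" "\<not> is_path_interior w" "\<not> is_path_interior y"
  shows "(w, y) \<in> skeleton_edges \<or> (y, w) \<in> skeleton_edges"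
  using assms path_edge_has_interior unfolding Gp_adj_def Gp_edges_split by blast

lemma skeleton_edge_AB:
  assumes "(w, y) \<in> skeleton_edges" "w \<in> {Av, Bv} \<or> y \<in> {Av, Bv}"
  shows "(w, y) \<in> {(Av, Bv), (Av, Cv), (Av, Dv), (Bv, Cv), (Bv, Dv)}"
  using assms unfolding skeleton_edges_def by auto

lemma AB_adj:
  assumes "ADJ w y" "w \<in> {Av, Bv} \<or> y \<in> {Av, Bv}"
  shows "(w, y) \<in> {(Av, Bv), (Av, Cv), (Av, Dv), (Bv, Cv), (Bv, Dv)} \<or>
    (y, w) \<in> {(Av, Bv), (Av, Cv), (Av, Dv), (Bv, Cv), (Bv, Dv)}"
proof -
  have "(w, y) \<notin> path_edges" "(y, w) \<notin> path_edges" using assms(2) path_edge_not_AB by blast+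
  then have "(w, y) \<in> skeleton_edges \<or> (y, w) \<in> skeleton_edges"
    using assms(1) unfolding Gp_adj_def Gp_edges_split by blast
  then show ?thesis using assms(2) skeleton_edge_AB by blast
qed

end

section \<open>Recoloring G' from \<open>\<alpha>\<close> to \<open>\<beta>\<close>\<close>

text \<open>A coloring of the vertices outside the forbidding paths of G'; the value 0 at the internal
  path vertices is never used.\<close>

definition skeleton_coloring ::
    "(nat \<Rightarrow> nat) \<Rightarrow> (nat set \<Rightarrow> nat) \<Rightarrow> (nat set \<Rightarrow> nat) \<Rightarrow> (nat set \<Rightarrow> nat) \<Rightarrow> nat \<Rightarrow> vtx \<Rightarrow> nat" where
  "skeleton_coloring co cx cy cz cc v = (case v of
      Orig u \<Rightarrow> co u | Xv e \<Rightarrow> cx e | Yv e \<Rightarrow> cy e | Zv e \<Rightarrow> cz e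
    | Av \<Rightarrow> 1 | Bv \<Rightarrow> 2 | Cv \<Rightarrow> cc | Dv \<Rightarrow> 4 | Pv _ _ _ \<Rightarrow> 0)"

context three_colored_construction
begin

text \<open>The colours of \<open>x_uv\<close>, \<open>y_uv\<close>, \<open>z_uv\<close> at the end of the forward phases: each is
  forced by the colour of \<open>u\<close> and the forbidden pairs of the incident paths.\<close>

definition x_color :: "nat set \<Rightarrow> nat" where
  "x_color e = (if f (fst (ori e)) = 1 then 4 else if f (fst (ori e)) = 2 then 1 else 2)"

definition y_color :: "nat set \<Rightarrow> nat" where
  "y_color e = (if f (fst (ori e)) = 1 then 3 else 4)"

definition z_color :: "nat set \<Rightarrow> nat" where
  "z_color e = (if f (fst (ori e)) = 1 then 2 else 1)"

definition orig_color :: "nat \<Rightarrow> nat" where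
  "orig_color u = (if u \<in> \<Union>E then f u else 1)"

text \<open>Phase \<open>i\<close> (\<open>1 \<le> i \<le> 4\<close>) recolors the vertices \<open>phase_set i\<close>; \<open>phase_coloring i\<close> is
  the skeleton coloring reached after it, and \<open>phase_coloring 0\<close> is that of \<open>\<alpha>\<close>.\<close>

definition phase_coloring :: "nat \<Rightarrow> vtx \<Rightarrow> nat" where
  "phase_coloring i = skeleton_coloring
     (if 1 \<le> i then orig_color else (\<lambda>_. 1))
     (if 2 \<le> i then x_color else (\<lambda>_. 4)) (if 2 \<le> i then y_color else (\<lambda>_. 4))
     (if 3 \<le> i then z_color else (\<lambda>_. 4)) (if 4 \<le> i then 4 else 3)"

definition phase_set :: "nat \<Rightarrow> vtx set" where
  "phase_set i = (if i = 1 then Orig ` \<Union>E else if i = 2 then Xv ` E \<union> Yv ` E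
     else if i = 3 then Zv ` E else {Cv})"

lemma phase_coloring_0: "\<not> is_path_interior z \<Longrightarrow> phase_coloring 0 z = Gp_alpha aint z"
  by (cases z) (auto simp: phase_coloring_def skeleton_coloring_def)

lemma finite_Union_E: "finite (\<Union>E)"
  using finite_E edge_ends(1) by (metis finite.emptyI finite.insertI finite_Union)

lemma finite_phase_set: "finite (phase_set i)"
  using finite_E finite_Union_E by (simp add: phase_set_def)

lemma card_phase_set:
  "card (phase_set 1) \<le> 2 * card E" "card (phase_set 2) \<le> 2 * card E"
  "card (phase_set 3) \<le> card E" "card (phase_set 4) = 1"
proof -
  have "card (phase_set 1) \<le> card (\<Union>E)" unfolding phase_set_def by (simp add: card_image_le finite_Union_E)
  also have "\<dots> \<le> (\<Sum>e\<in>E. card e)" by (rule card_Union_le_sum_card)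
  also have "\<dots> = 2 * card E" using graph unfolding oriented_graph_def by simp
  finally show "card (phase_set 1) \<le> 2 * card E" .
  have "card (phase_set 2) \<le> card (Xv ` E) + card (Yv ` E)" unfolding phase_set_def by (simp add: card_Un_le)
  also have "\<dots> \<le> 2 * card E" using card_image_le[OF finite_E, of Xv] card_image_le[OF finite_E, of Yv] by simp
  finally show "card (phase_set 2) \<le> 2 * card E" .
  show "card (phase_set 3) \<le> card E" "card (phase_set 4) = 1"
    unfolding phase_set_def by (simp_all add: card_image_le finite_E)
qed

lemma orig_color_edge:
  assumes "e \<in> E"
  shows "orig_color (fst (ori e)) = f (fst (ori e))" "orig_color (snd (ori e)) = f (snd (ori e))"
  using edge_ends(1)[OF assms] assms unfolding orig_color_def by (metis UnionI insertCI)+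

lemma phase_set_skeletal:
  assumes "w \<in> phase_set i" shows "w \<in> VS" and "\<not> is_path_interior w"
proof -
  have "\<Union>E \<subseteq> V" using graph unfolding oriented_graph_def by blast
  then show "w \<in> VS" using assms unfolding phase_set_def Gp_V_def by (auto split: if_splits)
  show "\<not> is_path_interior w" using assms unfolding phase_set_def by (auto split: if_splits)
qed

lemma phase_coloring_outside:
  assumes "i \<in> {1,2,3,4}" "z \<in> VS" "z \<notin> phase_set i"
  shows "phase_coloring i z = phase_coloring (i - 1) z"
  using assms by (cases z) (auto simp: phase_coloring_def skeleton_coloring_def phase_set_def
      orig_color_def Gp_V_def image_iff)

lemma phase_coloring_in_list:
  assumes "i \<in> {1,2,3,4}" "w \<in> phase_set i"
  shows "phase_coloring i w \<in> LL w"
proof -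
  have "f u \<in> {1,2,3}" if "u \<in> \<Union>E" for u
    using that f_colors graph unfolding oriented_graph_def by blast
  then show ?thesis using assms
    by (auto simp: phase_set_def phase_coloring_def skeleton_coloring_def orig_color_def
        x_color_def y_color_def z_color_def)
qed

lemma x_y_color_neq:
  assumes "e \<in> E"
  shows "x_color e \<noteq> f (fst (ori e))" "y_color e \<noteq> f (fst (ori e))"
  using edge_colors(2)[OF assms] by (auto simp: x_color_def y_color_def)

lemma z_color_neq: "z_color e \<noteq> 3" "z_color e \<noteq> 4"
  by (simp_all add: z_color_def)

lemma phase_set_neighbours:
  assumes i: "i \<in> {1,2,3,4}" and w: "w \<in> phase_set i" and y: "y \<in> VS" "skeletal y"
    and adj: "ADJ w y \<or> ADJ y w"
  shows "y \<notin> phase_set i \<and> phase_coloring i w \<noteq> phase_coloring i y"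
proof -
  have "ADJ w y" using adj unfolding Gp_adj_def by blast
  then have edge: "(w, y) \<in> skeleton_edges \<or> (y, w) \<in> skeleton_edges"
    using skeleton_adj phase_set_skeletal(2)[OF w] not_interior_if_skeletal[OF y] by blast
  consider "i = 1" | "i = 2" | "i = 3" | "i = 4" using i by blast
  then show ?thesis
  proof cases
    case 1
    then obtain e where "e \<in> E" "w = Orig (fst (ori e))" "y = Xv e \<or> y = Yv e"
      using edge w unfolding skeleton_edges_def phase_set_def by auto
    moreover from this have "f (fst (ori e)) \<noteq> 4" using edge_colors(2) by fastforce
    ultimately show ?thesis using 1 orig_color_edge
      by (auto simp: phase_set_def phase_coloring_def skeleton_coloring_def)
  next
    case 2
    then obtain e where "e \<in> E" "y = Orig (fst (ori e))" "w = Xv e \<or> w = Yv e"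
      using edge w unfolding skeleton_edges_def phase_set_def by auto
    then show ?thesis using 2 x_y_color_neq orig_color_edge
      by (auto simp: phase_set_def phase_coloring_def skeleton_coloring_def)
  next
    case 3
    then obtain e where "e \<in> E" "w = Zv e" "y = Cv"
      using edge w unfolding skeleton_edges_def phase_set_def by auto
    then show ?thesis using 3
      by (auto simp: z_color_neq phase_set_def phase_coloring_def skeleton_coloring_def)
  next
    case 4
    then have "w = Cv" "y = Av \<or> y = Bv \<or> (\<exists>e\<in>E. y = Zv e)"
      using edge w unfolding skeleton_edges_def phase_set_def by auto
    then show ?thesis using 4
      by (auto simp: z_color_neq phase_set_def phase_coloring_def skeleton_coloring_def)
  qed
qed

lemma phase_set_one_end:
  assumes "j \<in> E \<times> {0..<8}"
  shows "path j ! 0 \<notin> phase_set i \<or> path j ! 6 \<notin> phase_set i"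
  using gpath_ends[of "snd j" "fst j" "ori (fst j)"] assms by (auto simp: phase_set_def)

definition gadget_admissible :: "(vtx \<Rightarrow> nat) \<Rightarrow> nat set \<Rightarrow> bool" where
  "gadget_admissible s e \<longleftrightarrow>
     (let cu = s (Orig (fst (ori e))); cv = s (Orig (snd (ori e)));
          cx = s (Xv e); cy = s (Yv e); cz = s (Zv e) in
      (cu, cx) \<notin> {(1, 2), (3, 1)} \<and> (cu, cy) \<noteq> (2, 3) \<and> (cv, cx) \<notin> {(2, 1), (3, 2)} \<and>
      (cv, cy) \<noteq> (1, 3) \<and> (cx, cz) \<noteq> (4, 1) \<and> (cy, cz) \<noteq> (4, 2))"

lemma admissible_endsI:
  assumes "\<And>e. e \<in> E \<Longrightarrow> gadget_admissible s e"
  shows "admissible_ends s"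
  unfolding admissible_ends_def
proof
  fix j :: "nat set \<times> nat" assume "j \<in> E \<times> {0..<8}"
  then have "fst j \<in> E" "snd j < 8" by auto
  have gadget: "gadget_admissible s (fst j)" using assms \<open>fst j \<in> E\<close> .
  from gpath_ends[OF \<open>snd j < 8\<close>, of "fst j" "ori (fst j)"]
  show "s (path j ! 0) \<noteq> path_a (fst j) (ori (fst j)) (snd j) \<or>
        s (path j ! 6) \<noteq> path_b (fst j) (ori (fst j)) (snd j)"
    by (elim insertE emptyE) (use gadget in \<open>simp_all add: gadget_admissible_def Let_def\<close>)
qed

lemma phase_coloring_admissible: "admissible_ends (phase_coloring i)"
proof (rule admissible_endsI)
  fix e assume e: "e \<in> E"
  then show "gadget_admissible (phase_coloring i) e"
    using edge_colors[OF e] orig_color_edge[OF e]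
    by (auto simp: gadget_admissible_def phase_coloring_def skeleton_coloring_def
        x_color_def y_color_def z_color_def)
qed

lemma phase_step:
  assumes i: "i \<in> {1,2,3,4}" and \<gamma>: "is_Lcol VS ADJ LL \<gamma>"
    and prev: "\<forall>z\<in>VS. skeletal z \<longrightarrow> \<gamma> z = phase_coloring (i - 1) z"
  obtains \<delta> where "recolorable VS ADJ LL (40 * card E + card (phase_set i)) \<gamma> \<delta>"
    "\<forall>z\<in>VS. skeletal z \<longrightarrow> \<delta> z = phase_coloring i z"
proof -
  have "card (E \<times> {0..<8::nat}) = 8 * card E" by (simp add: card_cartesian_product)
  moreover obtain \<delta> where "recolorable VS ADJ LL (5 * card (E \<times> {0..<8::nat}) + card (phase_set i)) \<gamma> \<delta>"
    "\<forall>z\<in>VS. skeletal z \<longrightarrow> \<delta> z = phase_coloring i z"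
  proof (rule recolor_skeleton[OF \<gamma> prev finite_phase_set])
    show "phase_set i \<subseteq> VS" "\<forall>w\<in>phase_set i. skeletal w"
      using phase_set_skeletal skeletal_if_not_interior by auto
    show "\<forall>z\<in>VS. z \<notin> phase_set i \<longrightarrow> phase_coloring i z = phase_coloring (i - 1) z"
      using phase_coloring_outside[OF i] by blast
    show "\<forall>w\<in>phase_set i. phase_coloring i w \<in> LL w"
      using phase_coloring_in_list[OF i] by blast
    show "\<forall>w\<in>phase_set i. \<forall>y\<in>VS. (ADJ w y \<or> ADJ y w) \<longrightarrow> skeletal y \<longrightarrow>
        y \<notin> phase_set i \<and> phase_coloring i w \<noteq> phase_coloring i y"
      using phase_set_neighbours[OF i] by blast
    show "\<forall>j\<in>E \<times> {0..<8}. path j ! 0 \<notin> phase_set i \<or> path j ! 6 \<notin> phase_set i"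
      using phase_set_one_end by blast
    show "admissible_ends (phase_coloring i)" by (rule phase_coloring_admissible)
  qed
  ultimately show ?thesis using that by simp
qed

lemma alpha_is_Lcol: "is_Lcol VS ADJ LL (Gp_alpha aint)"
  using construction unfolding valid_construction_def by blast

lemma forward_phases:
  obtains \<delta> where "recolorable VS ADJ LL (165 * card E + 1) (Gp_alpha aint) \<delta>"
    "\<forall>z\<in>VS. skeletal z \<longrightarrow> \<delta> z = phase_coloring 4 z"
proof -
  have start: "\<forall>z\<in>VS. skeletal z \<longrightarrow> Gp_alpha aint z = phase_coloring (1 - 1) z"
    using phase_coloring_0 not_interior_if_skeletal by simp
  obtain \<delta>1 where r1: "recolorable VS ADJ LL (40 * card E + card (phase_set 1)) (Gp_alpha aint) \<delta>1"
    and s1: "\<forall>z\<in>VS. skeletal z \<longrightarrow> \<delta>1 z = phase_coloring (2 - 1) z"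
    using phase_step[of 1, OF _ alpha_is_Lcol start] by auto
  obtain \<delta>2 where r2: "recolorable VS ADJ LL (40 * card E + card (phase_set 2)) \<delta>1 \<delta>2"
    and s2: "\<forall>z\<in>VS. skeletal z \<longrightarrow> \<delta>2 z = phase_coloring (3 - 1) z"
    using phase_step[of 2, OF _ recolorable_is_Lcol(2)[OF r1] s1] by auto
  obtain \<delta>3 where r3: "recolorable VS ADJ LL (40 * card E + card (phase_set 3)) \<delta>2 \<delta>3"
    and s3: "\<forall>z\<in>VS. skeletal z \<longrightarrow> \<delta>3 z = phase_coloring (4 - 1) z"
    using phase_step[of 3, OF _ recolorable_is_Lcol(2)[OF r2] s2] by auto
  obtain \<delta>4 where r4: "recolorable VS ADJ LL (40 * card E + card (phase_set 4)) \<delta>3 \<delta>4"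
    and s4: "\<forall>z\<in>VS. skeletal z \<longrightarrow> \<delta>4 z = phase_coloring 4 z"
    using phase_step[of 4, OF _ recolorable_is_Lcol(2)[OF r3] s3] by auto
  have "recolorable VS ADJ LL (160 * card E + card (phase_set 1) + card (phase_set 2)
      + card (phase_set 3) + card (phase_set 4)) (Gp_alpha aint) \<delta>4"
    using recolorable_trans[OF recolorable_trans[OF recolorable_trans[OF r1 r2] r3] r4]
    by (simp add: algebra_simps)
  then have "recolorable VS ADJ LL (165 * card E + 1) (Gp_alpha aint) \<delta>4"
    by (rule recolorable_mono) (use card_phase_set in simp)
  with s4 show ?thesis using that by blast
qed

lemma C_D_colors: "is_Lcol VS ADJ LL g \<Longrightarrow> g Cv \<in> {3, 4} \<and> g Dv = 4"
  using is_Lcol_in_L[of VS ADJ LL g Cv] is_Lcol_in_L[of VS ADJ LL g Dv] unfolding Gp_V_def by auto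

lemma recolor_A_B:
  assumes g: "is_Lcol VS ADJ LL g" and a: "a \<in> {1, 2, 3}" and b: "b \<in> {1, 2}" and "a \<noteq> b"
    and "a \<notin> {g Cv, g Dv}" "b \<notin> {g Cv, g Dv}"
  shows "is_Lcol VS ADJ LL (g(Av := a, Bv := b))"
  unfolding is_Lcol_def
proof (intro conjI ballI impI)
  fix v assume "v \<in> VS"
  then show "(g(Av := a, Bv := b)) v \<in> LL v" using is_Lcol_in_L[OF g] a b by auto
next
  fix u v assume uv: "u \<in> VS" "v \<in> VS" "ADJ u v"
  show "(g(Av := a, Bv := b)) u \<noteq> (g(Av := a, Bv := b)) v"
  proof (cases "u \<in> {Av, Bv} \<or> v \<in> {Av, Bv}")
    case True
    then show ?thesis using AB_adj[OF uv(3) True] assms(4-6) by auto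
  next
    case False
    then show ?thesis using is_Lcol_adj[OF g uv] by auto
  qed
qed

definition swap_AB :: "(vtx \<Rightarrow> nat) \<Rightarrow> vtx \<Rightarrow> nat" where
  "swap_AB g = g(Av := 2, Bv := 1)"

lemma swap_AB_is_Lcol:
  assumes "is_Lcol VS ADJ LL g" shows "is_Lcol VS ADJ LL (swap_AB g)"
  unfolding swap_AB_def using assms C_D_colors[OF assms] by (intro recolor_A_B) auto

lemma recolorable_swap_AB:
  assumes "recolorable VS ADJ LL k g h"
  shows "recolorable VS ADJ LL k (swap_AB g) (swap_AB h)"
proof (rule recolorable_map[OF assms])
  show "is_Lcol VS ADJ LL (swap_AB q)" if "is_Lcol VS ADJ LL q" for q
    using that by (rule swap_AB_is_Lcol)
  show "single_change VS (swap_AB q) (swap_AB r)" if "single_change VS q r" for q r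
    using that unfolding swap_AB_def by (intro single_change_fun_upd)
  show "agree_on VS (swap_AB q) (swap_AB r)" if "agree_on VS q r" for q r
    using that unfolding swap_AB_def agree_on_def by simp
qed

text \<open>Once \<open>c\<close> has colour 4, \<open>a\<close> and \<open>b\<close> exchange their colours through colour 3.\<close>

lemma swap_AB_when_C_is_4:
  assumes g: "is_Lcol VS ADJ LL g" and "g Av = 1" "g Bv = 2" "g Cv = 4"
  shows "recolorable VS ADJ LL 3 g (swap_AB g)"
proof -
  have D: "g Dv = 4" using C_D_colors[OF g] by simp
  define g1 where "g1 = g(Av := 3, Bv := 2)"
  define g2 where "g2 = g(Av := 3, Bv := 1)"
  have g1: "is_Lcol VS ADJ LL g1" unfolding g1_def using assms D by (intro recolor_A_B) auto
  have g2: "is_Lcol VS ADJ LL g2" unfolding g2_def using assms D by (intro recolor_A_B) auto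
  have "recolorable VS ADJ LL 1 g g1"
    using recolorable_step[OF g g1] assms(3) unfolding single_change_def g1_def by auto
  moreover have "recolorable VS ADJ LL 1 g1 g2"
    using recolorable_step[OF g1 g2] unfolding single_change_def g1_def g2_def by auto
  moreover have "recolorable VS ADJ LL 1 g2 (swap_AB g)"
    using recolorable_step[OF g2 swap_AB_is_Lcol[OF g]] unfolding single_change_def g2_def swap_AB_def by auto
  ultimately have "recolorable VS ADJ LL (1 + 1 + 1) g (swap_AB g)"
    using recolorable_trans by blast
  then show ?thesis by (simp add: eval_nat_numeral)
qed

lemma recolorable_alpha_beta:
  "recolorable VS ADJ LL (330 * (card E + 1)) (Gp_alpha aint) (Gp_beta aint)"
proof -
  obtain \<delta> where forward: "recolorable VS ADJ LL (165 * card E + 1) (Gp_alpha aint) \<delta>"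
    and \<delta>: "\<forall>z\<in>VS. skeletal z \<longrightarrow> \<delta> z = phase_coloring 4 z"
    by (rule forward_phases)
  have "\<delta> Av = 1" "\<delta> Bv = 2" "\<delta> Cv = 4"
    using \<delta> skeletal_if_not_interior unfolding Gp_V_def
    by (auto simp: phase_coloring_def skeleton_coloring_def)
  then have "recolorable VS ADJ LL 3 \<delta> (swap_AB \<delta>)"
    using swap_AB_when_C_is_4 recolorable_is_Lcol(2)[OF forward] by blast
  moreover have "recolorable VS ADJ LL (165 * card E + 1) (swap_AB \<delta>) (Gp_beta aint)"
    using recolorable_swap_AB[OF recolorable_sym[OF forward]] by (simp add: swap_AB_def Gp_beta_def)
  ultimately have "recolorable VS ADJ LL (165 * card E + 1 + 3 + (165 * card E + 1)) (Gp_alpha aint) (Gp_beta aint)"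
    using recolorable_trans[OF recolorable_trans[OF forward]] by blast
  then show ?thesis by (rule recolorable_mono) simp
qed

end

theorem mainTheorem7:
  shows "\<exists>c::nat. \<forall>V E ori Lint aint.
     oriented_graph V E ori \<and> valid_construction V E ori Lint aint \<and> three_colorable V E \<longrightarrow>
     (\<exists>\<sigma> n. recol_seq (Gp_V V E) (Gp_adj E ori) (Gp_L Lint) \<sigma> n \<and>
        (\<forall>w\<in>Gp_V V E. \<sigma> 0 w = Gp_alpha aint w) \<and>
        (\<forall>w\<in>Gp_V V E. \<sigma> n w = Gp_beta aint w) \<and>
        n \<le> c * (card E + 1))"
proof (rule exI[of _ 330], intro allI impI)
  fix V E ori Lint aint
  assume "oriented_graph V E ori \<and> valid_construction V E ori Lint aint \<and> three_colorable V E"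
  then obtain f where "three_colored_construction V E ori Lint aint f"
    unfolding three_colorable_def three_colored_construction_def by blast
  then have "recolorable (Gp_V V E) (Gp_adj E ori) (Gp_L Lint) (330 * (card E + 1))
      (Gp_alpha aint) (Gp_beta aint)"
    by (rule three_colored_construction.recolorable_alpha_beta)
  then show "\<exists>\<sigma> n. recol_seq (Gp_V V E) (Gp_adj E ori) (Gp_L Lint) \<sigma> n \<and>
        (\<forall>w\<in>Gp_V V E. \<sigma> 0 w = Gp_alpha aint w) \<and>
        (\<forall>w\<in>Gp_V V E. \<sigma> n w = Gp_beta aint w) \<and>
        n \<le> 330 * (card E + 1)"
    unfolding recolorable_def agree_on_def by (metis order_refl)
qed

end
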